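(* Let $n,m$ be positive integers with $m$ even. If $n$ and $m$ are sufficiently large, then the zero-error (Las Vegas) randomized query complexity of $g_{n,m}$ satisfies $R_0(g_{n,m})=\Omega(nm)$.
   Context: Let $n,m$ be positive integers with $m$ even, $M=[n]\times[m]$ (a grid of cells with $n$ rows and $m$ columns), $\tilde M = M\cup\{\bot\}$ (pointers to cells, $\bot$ is the null pointer). Let $T$ be the following fixed binary tree with $m$ leaves and $m-1$ internal nodes: if $m=2^k$, $T$ is the complete binary tree with $2^k$ leaves; if $2^k<m<2^{k+1}$, take the complete binary tree with $2^k$ leaves and add a pair of children to each of its $m-2^k$ leftmost leaves. Outgoing arcs of internal nodes are labeled 'left' and 'right', leaves are labeled $1,\dots,m$ from left to right, and $T(j)$ is the sequence of 'left'/'right' labels on the root-to-leaf-$j$ path. The input alphabet is $\Sigma=\{0,1\}\times\tilde M\times\tilde M\times\tilde M$; for $v\in\Sigma$ its components are $\mathrm{val}(v),\mathrm{lpoint}(v),\mathrm{rpoint}(v),\mathrm{bpoint}(v)$. The function $g_{n,m}\colon\Sigma^M\to\{0,1\}$ is defined by $g_{n,m}(x)=1$ iff: (1) there is exactly one column $b\in[m]$ with $\mathrm{val}(x_{i,b})=1$ for all $i\in[n]$ (the marked column); (2) in column $b$ there is a unique cell $a$ with $x_a\ne(1,\bot,\bot,\bot)$ (the special element); (3) for each column $j\in[m]\setminus\{b\}$, the path starting at $a$ and following $\mathrm{lpoint},\mathrm{rpoint}$ as specified by $T(j)$ exists (no pointer on it is $\bot$) and ends in a cell $\ell_j$ in column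 $j$ with $\mathrm{val}(x_{\ell_j})=0$; (4') the set $G=\{j\in[m]\setminus\{b\} : \mathrm{bpoint}(x_{\ell_j})=a\}$ has size exactly $m/2$. A query asks for the value $x_c\in\Sigma$ of one cell $c\in M$. $R_0(f)$ is the minimum, over randomized decision trees (distributions over deterministic decision trees) all of whose trees in the support compute $f$, of the maximum over inputs of the expected number of queries. *)

theory Defs
  imports "HOL-Probability.Probability"
begin

type_synonym cell = "nat \<times> nat"   (* (row, column) *)
type_synonym ptr = "cell option"     (* None = the null pointer \<bottom> *)
(* a letter: (val, lpoint, rpoint, bpoint); val True means 1, False means 0 *)
type_synonym sym = "bool \<times> ptr \<times> ptr \<times> ptr"

definition val :: "sym \<Rightarrow> bool" where "val v = fst v"
definition lpoint :: "sym \<Rightarrow> ptr" where "lpoint v = fst (snd v)"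
definition rpoint :: "sym \<Rightarrow> ptr" where "rpoint v = fst (snd (snd v))"
definition bpoint :: "sym \<Rightarrow> ptr" where "bpoint v = snd (snd (snd v))"

definition grid :: "nat \<Rightarrow> nat \<Rightarrow> cell set" where
  "grid n m = {1..n} \<times> {1..m}"

definition valid_ptr :: "nat \<Rightarrow> nat \<Rightarrow> ptr \<Rightarrow> bool" where
  "valid_ptr n m p = (case p of None \<Rightarrow> True | Some c \<Rightarrow> c \<in> grid n m)"

definition one_null :: sym where "one_null = (True, None, None, None)"

(* Inputs x \<in> \<Sigma>^M, represented as functions on all cells that are fixed
   (to a dummy value) outside M, with all pointers in M \<union> {\<bottom>}. *)
definition inputs :: "nat \<Rightarrow> nat \<Rightarrow> (cell \<Rightarrow> sym) set" where
  "inputs n m = {x. (\<forall>c \<in> grid n m. valid_ptr n m (lpoint (x c)) \<and>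
                       valid_ptr n m (rpoint (x c)) \<and> valid_ptr n m (bpoint (x c)))
                  \<and> (\<forall>c. c \<notin> grid n m \<longrightarrow> x c = (False, None, None, None))}"

datatype btree = BLeaf | BNode btree btree

fun complete :: "nat \<Rightarrow> btree" where
  "complete 0 = BLeaf"
| "complete (Suc k) = BNode (complete k) (complete k)"

(* root-to-leaf label sequences, leaves from left to right; False = 'left', True = 'right' *)
fun leaf_paths :: "btree \<Rightarrow> bool list list" where
  "leaf_paths BLeaf = [[]]"
| "leaf_paths (BNode l r) = map (Cons False) (leaf_paths l) @ map (Cons True) (leaf_paths r)"

definition tlog :: "nat \<Rightarrow> nat" where
  "tlog m = (GREATEST k. 2 ^ k \<le> m)"

(* Leaf paths of T: complete tree with 2^k leaves (2^k \<le> m < 2^(k+1)), with a pair of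
   children added to each of its m - 2^k leftmost leaves. *)
definition T_paths :: "nat \<Rightarrow> bool list list" where
  "T_paths m = (let k = tlog m; r = m - 2 ^ k; ps = leaf_paths (complete k) in
     concat (map (\<lambda>i. if i < r then [ps ! i @ [False], ps ! i @ [True]] else [ps ! i])
                 [0..<length ps]))"

definition Tpath :: "nat \<Rightarrow> nat \<Rightarrow> bool list" where
  "Tpath m j = T_paths m ! (j - 1)"

fun follow :: "(cell \<Rightarrow> sym) \<Rightarrow> cell \<Rightarrow> bool list \<Rightarrow> cell option" where
  "follow x a [] = Some a"
| "follow x a (d # ds) =
     (case (if d then rpoint (x a) else lpoint (x a)) of
        None \<Rightarrow> None
      | Some c \<Rightarrow> follow x c ds)"

definition marked_col :: "nat \<Rightarrow> (cell \<Rightarrow> sym) \<Rightarrow> nat \<Rightarrow> bool" where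
  "marked_col n x b = (\<forall>i \<in> {1..n}. val (x (i, b)))"

definition g :: "nat \<Rightarrow> nat \<Rightarrow> (cell \<Rightarrow> sym) \<Rightarrow> bool" where
  "g n m x = (\<exists>b a.
     \<comment> \<open>(1) b is the unique marked column\<close>
     b \<in> {1..m} \<and> marked_col n x b \<and> (\<forall>b' \<in> {1..m}. marked_col n x b' \<longrightarrow> b' = b) \<and>
     \<comment> \<open>(2) a is the unique special element of column b\<close>
     a \<in> grid n m \<and> snd a = b \<and> x a \<noteq> one_null \<and>
     (\<forall>a' \<in> grid n m. snd a' = b \<and> x a' \<noteq> one_null \<longrightarrow> a' = a) \<and>
     \<comment> \<open>(3) paths to leaves exist and end in val-0 cells of the right column\<close>
     (\<forall>j \<in> {1..m} - {b}. \<exists>l. follow x a (Tpath m j) = Some l \<and> snd l = j \<and> \<not> val (x l)) \<and>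
     \<comment> \<open>(4') exactly m/2 back pointers to a\<close>
     card {j \<in> {1..m} - {b}. bpoint (x (the (follow x a (Tpath m j)))) = Some a} = m div 2)"

datatype dtree = DLeaf bool | DQuery cell "sym \<Rightarrow> dtree"

primrec dt_eval :: "dtree \<Rightarrow> (cell \<Rightarrow> sym) \<Rightarrow> bool" where
  "dt_eval (DLeaf b) x = b"
| "dt_eval (DQuery c f) x = dt_eval (f (x c)) x"

primrec dt_cost :: "dtree \<Rightarrow> (cell \<Rightarrow> sym) \<Rightarrow> nat" where
  "dt_cost (DLeaf b) x = 0"
| "dt_cost (DQuery c f) x = Suc (dt_cost (f (x c)) x)"

definition R0 :: "(cell \<Rightarrow> sym) set \<Rightarrow> ((cell \<Rightarrow> sym) \<Rightarrow> bool) \<Rightarrow> ennreal" where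
  "R0 X f = (INF D \<in> {D :: dtree pmf. \<forall>t \<in> set_pmf D. \<forall>x \<in> X. dt_eval t x = f x}.
               SUP x \<in> X. \<integral>\<^sup>+ t. ennreal (real (dt_cost t x)) \<partial>(measure_pmf D))"

end

theory Submission
  imports Defs
begin

lemma sym_components [simp]:
  "val (v, l, r, p) = v" "lpoint (v, l, r, p) = l" "rpoint (v, l, r, p) = r" "bpoint (v, l, r, p) = p"
  by (simp_all add: val_def lpoint_def rpoint_def bpoint_def)

primrec dt_queries :: "dtree \<Rightarrow> (cell \<Rightarrow> sym) \<Rightarrow> cell list" where
  "dt_queries (DLeaf v) x = []"
| "dt_queries (DQuery c f) x = c # dt_queries (f (x c)) x"

lemma length_dt_queries: "length (dt_queries t x) = dt_cost t x"
  by (induction t) simp_all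

lemma dt_eval_cong_queries:
  "(\<And>c. c \<in> set (dt_queries t x) \<Longrightarrow> y c = x c) \<Longrightarrow> dt_eval t y = dt_eval t x"
  by (induction t) simp_all

text \<open>The easy direction of Yao's principle: the uniform distribution over the inputs
  \<open>x z\<close>, \<open>z \<in> Z\<close>, bounds \<open>R0\<close> from below by the least average cost of a correct tree.\<close>

lemma R0_ge_average_cost:
  fixes x :: "'i \<Rightarrow> cell \<Rightarrow> sym"
  assumes Z: "finite Z" "Z \<noteq> {}" and inputs: "x ` Z \<subseteq> X"
    and average: "\<And>t. (\<And>y. y \<in> X \<Longrightarrow> dt_eval t y = f y) \<Longrightarrow>
                       s * real (card Z) \<le> (\<Sum>z\<in>Z. real (dt_cost t (x z)))"
  shows "ennreal s \<le> R0 X f"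
  unfolding R0_def
proof (rule INF_greatest)
  fix D :: "dtree pmf"
  assume "D \<in> {D. \<forall>t\<in>set_pmf D. \<forall>y\<in>X. dt_eval t y = f y}"
  then have correct: "t \<in> set_pmf D \<Longrightarrow> y \<in> X \<Longrightarrow> dt_eval t y = f y" for t y
    by blast
  define cost where "cost z = (\<integral>\<^sup>+ t. ennreal (real (dt_cost t (x z))) \<partial>measure_pmf D)" for z
  define S where "S = (SUP y\<in>X. \<integral>\<^sup>+ t. ennreal (real (dt_cost t y)) \<partial>measure_pmf D)"
  have "of_nat (card Z) * ennreal s = (\<integral>\<^sup>+ t. ennreal (s * real (card Z)) \<partial>measure_pmf D)"
    by (cases "s \<ge> 0")
       (simp_all add: measure_pmf.emeasure_space_1 ennreal_mult ennreal_of_nat_eq_real_of_nat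
                      ennreal_neg mult.commute mult_nonpos_nonneg)
  also have "\<dots> \<le> (\<integral>\<^sup>+ t. (\<Sum>z\<in>Z. ennreal (real (dt_cost t (x z)))) \<partial>measure_pmf D)"
  proof (intro nn_integral_mono_AE AE_pmfI)
    fix t assume "t \<in> set_pmf D"
    then have "s * real (card Z) \<le> (\<Sum>z\<in>Z. real (dt_cost t (x z)))"
      by (intro average correct)
    then show "ennreal (s * real (card Z)) \<le> (\<Sum>z\<in>Z. ennreal (real (dt_cost t (x z))))"
      by (simp add: ennreal_leI)
  qed
  also have "\<dots> = (\<Sum>z\<in>Z. cost z)"
    unfolding cost_def by (rule nn_integral_sum) simp
  also have "\<dots> \<le> (\<Sum>z\<in>Z. S)"
    unfolding cost_def S_def using inputs by (intro sum_mono SUP_upper) auto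
  also have "\<dots> = of_nat (card Z) * S"
    by simp
  finally show "ennreal s \<le> S"
    using Z by (subst (asm) ennreal_mult_le_mult_iff) (simp_all add: ennreal_of_nat_eq_real_of_nat)
qed

lemma leaf_paths_complete:
  "distinct (leaf_paths (complete k)) \<and> set (leaf_paths (complete k)) = {ds. length ds = k}
   \<and> length (leaf_paths (complete k)) = 2 ^ k"
proof (induction k)
  case (Suc k)
  have "set (leaf_paths (complete (Suc k))) = {ds. length ds = Suc k}"
  proof
    show "{ds. length ds = Suc k} \<subseteq> set (leaf_paths (complete (Suc k)))"
    proof
      fix ds :: "bool list" assume "ds \<in> {ds. length ds = Suc k}"
      then obtain d es where "ds = d # es" "length es = k" by (cases ds) auto
      then show "ds \<in> set (leaf_paths (complete (Suc k)))" using Suc by (cases d) auto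
    qed
  qed (use Suc in auto)
  then show ?case using Suc by (auto simp: distinct_map inj_on_def)
qed simp

lemma tlog_bounds:
  assumes "1 \<le> m"
  shows "2 ^ tlog m \<le> m" "m < 2 ^ Suc (tlog m)"
proof -
  have bounded: "\<forall>k. 2 ^ k \<le> m \<longrightarrow> k \<le> m"
    by (metis dual_order.trans less_exp order_less_imp_le)
  have "2 ^ 0 \<le> m"
    using assms by simp
  then show "2 ^ tlog m \<le> m"
    unfolding tlog_def by (rule GreatestI_nat) (use bounded in auto)
  show "m < 2 ^ Suc (tlog m)"
  proof (rule ccontr)
    assume "\<not> m < 2 ^ Suc (tlog m)"
    then have "Suc (tlog m) \<le> tlog m"
      unfolding tlog_def by (intro Greatest_le_nat[where b=m]) (use bounded in auto)
    then show False by simp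
  qed
qed

lemma one_le_tlog: "2 \<le> m \<Longrightarrow> 1 \<le> tlog m"
  using tlog_bounds(2)[of m] by (cases "tlog m") auto

definition T_block :: "nat \<Rightarrow> nat \<Rightarrow> bool list list" where
  "T_block m i = (let p = leaf_paths (complete (tlog m)) ! i in
     if i < m - 2 ^ tlog m then [p @ [False], p @ [True]] else [p])"

lemma T_paths_blocks: "T_paths m = concat (map (T_block m) [0..<2 ^ tlog m])"
  unfolding T_paths_def T_block_def Let_def by (simp add: leaf_paths_complete)

lemma T_block_elem:
  assumes "i < 2 ^ tlog m" "u \<in> set (T_block m i)"
  shows "take (tlog m) u = leaf_paths (complete (tlog m)) ! i"
    and "length u = (if i < m - 2 ^ tlog m then Suc (tlog m) else tlog m)"
proof -
  have "length (leaf_paths (complete (tlog m)) ! i) = tlog m"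
    using assms(1) leaf_paths_complete[of "tlog m"] nth_mem by fastforce
  then show "take (tlog m) u = leaf_paths (complete (tlog m)) ! i"
    and "length u = (if i < m - 2 ^ tlog m then Suc (tlog m) else tlog m)"
    using assms(2) by (auto simp: T_block_def Let_def split: if_splits)
qed

lemma T_paths_memE:
  assumes "u \<in> set (T_paths m)"
  obtains i where "i < 2 ^ tlog m" "u \<in> set (T_block m i)"
  using assms by (auto simp: T_paths_blocks)

lemma T_block_eq_index:
  assumes "i < 2 ^ tlog m" "i' < 2 ^ tlog m" "u \<in> set (T_block m i)" "v \<in> set (T_block m i')"
    and "take (tlog m) u = take (tlog m) v"
  shows "i = i'"
  using assms T_block_elem(1)[OF assms(1,3)] T_block_elem(1)[OF assms(2,4)]
    leaf_paths_complete[of "tlog m"] by (simp add: nth_eq_iff_index_eq)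

lemma T_blocks_disjoint:
  assumes "i < 2 ^ tlog m" "i' < 2 ^ tlog m" "i \<noteq> i'"
  shows "set (T_block m i) \<inter> set (T_block m i') = {}"
  using T_block_eq_index[OF assms(1,2)] assms(3) by blast

lemma distinct_T_paths: "distinct (T_paths m)"
  unfolding T_paths_blocks
proof (rule distinct_concat)
  have "inj_on (T_block m) {0..<2 ^ tlog m}"
  proof (rule inj_onI, rule ccontr)
    fix i i' assume "i \<in> {0..<2 ^ tlog m}" "i' \<in> {0..<2 ^ tlog m}" "i \<noteq> i'"
      and "T_block m i = T_block m i'"
    moreover have "T_block m i \<noteq> []"
      by (simp add: T_block_def Let_def)
    ultimately show False
      using T_blocks_disjoint[of i m i'] by (simp add: neq_Nil_conv)
  qed
  then show "distinct (map (T_block m) [0..<2 ^ tlog m])"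
    by (simp add: distinct_map)
  show "\<And>ys. ys \<in> set (map (T_block m) [0..<2 ^ tlog m]) \<Longrightarrow> distinct ys"
    by (auto simp: T_block_def Let_def)
  show "\<And>ys zs. ys \<in> set (map (T_block m) [0..<2 ^ tlog m]) \<Longrightarrow>
          zs \<in> set (map (T_block m) [0..<2 ^ tlog m]) \<Longrightarrow> ys \<noteq> zs \<Longrightarrow> set ys \<inter> set zs = {}"
    using T_blocks_disjoint[of _ m] by (auto simp: disjoint_iff) metis
qed

lemma sum_list_if_less: "(\<Sum>i\<leftarrow>[0..<N]. if i < r then 2 else 1) = N + min r (N::nat)"
  by (induction N) auto

lemma length_T_paths:
  assumes "1 \<le> m"
  shows "length (T_paths m) = m"
proof -
  have "length (T_paths m) = (\<Sum>i\<leftarrow>[0..<2 ^ tlog m]. if i < m - 2 ^ tlog m then 2 else 1)"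
    unfolding T_paths_blocks length_concat map_map comp_def
    by (intro arg_cong[where f=sum_list] map_cong) (simp_all add: T_block_def Let_def)
  also have "\<dots> = 2 ^ tlog m + min (m - 2 ^ tlog m) (2 ^ tlog m)"
    by (rule sum_list_if_less)
  finally show ?thesis
    using tlog_bounds[OF assms] by simp
qed

lemma T_paths_prefix_free:
  assumes "u \<in> set (T_paths m)" "u @ ds \<in> set (T_paths m)"
  shows "ds = []"
proof -
  obtain i i' where i: "i < 2 ^ tlog m" "u \<in> set (T_block m i)"
    and i': "i' < 2 ^ tlog m" "u @ ds \<in> set (T_block m i')"
    using assms by (metis T_paths_memE)
  have "length u \<ge> tlog m"
    using T_block_elem(2)[OF i] by simp
  then have "i = i'"
    using T_block_eq_index[OF i(1) i'(1) i(2) i'(2)] by simp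
  then show "ds = []"
    using T_block_elem(2)[OF i] T_block_elem(2)[OF i'] by simp
qed

lemma length_T_paths_elem:
  assumes "u \<in> set (T_paths m)"
  shows "tlog m \<le> length u" "length u \<le> Suc (tlog m)"
  using assms T_block_elem(2) by (fastforce elim: T_paths_memE)+

definition tree_nodes :: "nat \<Rightarrow> bool list set" where
  "tree_nodes m = {p. \<exists>j\<in>{1..m}. \<exists>ds. Tpath m j = p @ ds}"

lemma Tpath_in_T_paths: "j \<in> {1..m} \<Longrightarrow> Tpath m j \<in> set (T_paths m)"
  by (auto simp: Tpath_def length_T_paths intro!: nth_mem)

lemma inj_on_Tpath: "inj_on (Tpath m) {1..m}"
  using distinct_T_paths[of m]
  by (auto intro!: inj_onI simp: Tpath_def length_T_paths nth_eq_iff_index_eq)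

lemma Tpath_append_eq_Nil:
  "i \<in> {1..m} \<Longrightarrow> j \<in> {1..m} \<Longrightarrow> Tpath m j = Tpath m i @ ds \<Longrightarrow> ds = []"
  using T_paths_prefix_free Tpath_in_T_paths by metis

lemma Tpath_ne_Nil: "2 \<le> m \<Longrightarrow> j \<in> {1..m} \<Longrightarrow> Tpath m j \<noteq> []"
  using length_T_paths_elem(1)[OF Tpath_in_T_paths] one_le_tlog by fastforce

lemma tree_nodes_prefix: "p @ q \<in> tree_nodes m \<Longrightarrow> p \<in> tree_nodes m"
  unfolding tree_nodes_def by auto

lemma Tpath_in_tree_nodes: "j \<in> {1..m} \<Longrightarrow> Tpath m j \<in> tree_nodes m"
  unfolding tree_nodes_def by blast

lemma tree_nodes_subset: "tree_nodes m \<subseteq> {ds. set ds \<subseteq> UNIV \<and> length ds \<le> Suc (tlog m)}"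
  unfolding tree_nodes_def using length_T_paths_elem(2)[OF Tpath_in_T_paths] by fastforce

lemma finite_bool_lists_length_le: "finite {ds :: bool list. set ds \<subseteq> UNIV \<and> length ds \<le> k}"
  by (rule finite_lists_length_le) simp

lemma finite_tree_nodes: "finite (tree_nodes m)"
  using tree_nodes_subset finite_bool_lists_length_le by (rule finite_subset)

lemma card_tree_nodes:
  assumes "1 \<le> m"
  shows "card (tree_nodes m) < 4 * m"
proof -
  have "card (tree_nodes m) \<le> card {ds :: bool list. set ds \<subseteq> UNIV \<and> length ds \<le> Suc (tlog m)}"
    using finite_bool_lists_length_le tree_nodes_subset by (rule card_mono)
  also have "\<dots> = (\<Sum>i<Suc (Suc (tlog m)). 2 ^ i)"
    by (subst card_lists_length_le) (simp_all add: lessThan_Suc_atMost)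
  also have "\<dots> < 2 ^ Suc (Suc (tlog m))"
    using sum_power2[of "Suc (Suc (tlog m))"] by (simp add: atLeast0LessThan)
  also have "\<dots> \<le> 4 * m"
    using tlog_bounds(1)[OF assms] by simp
  finally show ?thesis .
qed

lemma follow_embedded_paths:
  assumes prefix_closed: "\<And>p q. p @ q \<in> P \<Longrightarrow> p \<in> P"
    and child: "\<And>p d. p @ [d] \<in> P \<Longrightarrow>
                  (if d then rpoint (x (e p)) else lpoint (x (e p))) = Some (e (p @ [d]))"
  shows "p @ ds \<in> P \<Longrightarrow> follow x (e p) ds = Some (e (p @ ds))"
proof (induction ds arbitrary: p)
  case (Cons d ds)
  then have "follow x (e (p @ [d])) ds = Some (e (p @ d # ds))"
    using Cons.IH[of "p @ [d]"] by simp
  moreover have "p @ [d] \<in> P"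
    using prefix_closed[of "p @ [d]" ds] Cons.prems by simp
  ultimately show ?case
    using child[of p d] by (cases d) auto
qed simp

definition zero_null :: sym where "zero_null = (False, None, None, None)"

definition hard_input :: "nat \<Rightarrow> nat \<Rightarrow> (nat \<Rightarrow> nat) \<Rightarrow> cell \<Rightarrow> sym" where
  "hard_input n m z c = (if c \<in> grid n m \<and> fst c \<noteq> z (snd c) then one_null else zero_null)"

lemma hard_input_in_inputs: "hard_input n m z \<in> inputs n m"
  by (simp add: inputs_def hard_input_def valid_ptr_def zero_null_def one_null_def)

lemma not_g_hard_input:
  assumes "\<And>j. j \<in> {1..m} \<Longrightarrow> z j \<in> {1..n}"
  shows "\<not> g n m (hard_input n m z)"
proof
  assume "g n m (hard_input n m z)"
  then obtain b where "b \<in> {1..m}" "marked_col n (hard_input n m z) b"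
    unfolding g_def by blast
  then have "val (hard_input n m z (z b, b))"
    using assms[of b] by (simp add: marked_col_def)
  then show False
    by (simp add: hard_input_def zero_null_def)
qed

definition zeros_found :: "nat \<Rightarrow> nat \<Rightarrow> dtree \<Rightarrow> nat \<Rightarrow> nat set \<Rightarrow> (nat \<Rightarrow> nat) \<Rightarrow> bool" where
  "zeros_found n m t K U z \<longleftrightarrow> (\<forall>j\<in>U. (z j, j) \<in> set (take K (dt_queries t (hard_input n m z))))"

lemma zeros_found_Cons:
  assumes "zeros_found n m (DQuery c f) (Suc K) U z" "\<And>j. j \<in> U \<Longrightarrow> (z j, j) \<noteq> c"
  shows "zeros_found n m (f (hard_input n m z c)) K U z"
  using assms by (auto simp: zeros_found_def)

lemma card_zeros_found_no_queries:
  assumes "\<And>z j. z \<in> Z \<Longrightarrow> j \<notin> U \<Longrightarrow> z j = w j"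
    and "\<And>z. take K (dt_queries t (hard_input n m z)) = []"
  shows "card {z\<in>Z. zeros_found n m t K U z} \<le> K choose card U"
proof (cases "U = {}")
  case True
  then have "{z\<in>Z. zeros_found n m t K U z} \<subseteq> {w}"
    using assms(1) by (auto simp: zeros_found_def)
  then show ?thesis
    using True card_mono[of "{w}"] by fastforce
next
  case False
  then have "\<not> zeros_found n m t K U z" for z
    using assms(2)[of z] by (metis all_not_in_conv empty_set zeros_found_def)
  then show ?thesis
    by simp
qed

text \<open>A query to a cell \<open>(r, j)\<close> with \<open>j \<in> U\<close> splits the candidates \<open>z\<close> into those with
  \<open>z j = r\<close>, for which one zero less remains to be found, and the others; this gives
  Pascal's recurrence for the bound.\<close>

lemma card_zeros_found:
  assumes "finite Z" "U \<subseteq> {1..m}"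
    and "\<And>z j. z \<in> Z \<Longrightarrow> j \<notin> U \<Longrightarrow> z j = w j"
    and "\<And>z j. z \<in> Z \<Longrightarrow> j \<in> U \<Longrightarrow> z j \<in> {1..n}"
  shows "card {z\<in>Z. zeros_found n m t K U z} \<le> K choose card U"
  using assms
proof (induction t arbitrary: Z U w K)
  case (DLeaf v)
  then show ?case
    by (intro card_zeros_found_no_queries) simp_all
next
  case (DQuery c f)
  show ?case
  proof (cases K)
    case 0
    then show ?thesis
      using DQuery.prems by (intro card_zeros_found_no_queries) simp_all
  next
    case (Suc K')
    obtain r j where c: "c = (r, j)"
      by fastforce
    show ?thesis
    proof (cases "j \<in> U \<and> r \<in> {1..n}")
      case True
      define Z1 where "Z1 = {z\<in>Z. z j = r}"
      define Z2 where "Z2 = {z\<in>Z. z j \<noteq> r}"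
      have c_grid: "c \<in> grid n m"
        using True DQuery.prems(2) by (auto simp: c grid_def)
      have found1: "zeros_found n m (f zero_null) K' (U - {j}) z"
        if "z \<in> Z1" "zeros_found n m (DQuery c f) K U z" for z
      proof -
        have "zeros_found n m (DQuery c f) (Suc K') (U - {j}) z"
          using that(2) by (auto simp: zeros_found_def Suc)
        moreover have "hard_input n m z c = zero_null"
          using that(1) by (simp add: Z1_def c hard_input_def)
        ultimately show ?thesis
          using zeros_found_Cons[of n m c f K' "U - {j}" z] by (auto simp: c)
      qed
      have found2: "zeros_found n m (f one_null) K' U z"
        if "z \<in> Z2" "zeros_found n m (DQuery c f) K U z" for z
      proof -
        have "hard_input n m z c = one_null"
          using that(1) c_grid by (simp add: Z2_def c hard_input_def)
        then show ?thesis
          using that zeros_found_Cons[of n m c f K' U z] by (auto simp: c Z2_def Suc)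
      qed
      have "finite Z1" "finite Z2"
        using DQuery.prems(1) by (simp_all add: Z1_def Z2_def)
      have "card {z\<in>Z. zeros_found n m (DQuery c f) K U z}
          \<le> card ({z\<in>Z1. zeros_found n m (f zero_null) K' (U - {j}) z}
                 \<union> {z\<in>Z2. zeros_found n m (f one_null) K' U z})"
        using found1 found2 DQuery.prems(1) by (intro card_mono) (auto simp: Z1_def Z2_def)
      also have "\<dots> \<le> card {z\<in>Z1. zeros_found n m (f zero_null) K' (U - {j}) z}
                   + card {z\<in>Z2. zeros_found n m (f one_null) K' U z}"
        by (rule card_Un_le)
      also have "\<dots> \<le> (K' choose card (U - {j})) + (K' choose card U)"
      proof (rule add_mono)
        show "card {z\<in>Z1. zeros_found n m (f zero_null) K' (U - {j}) z} \<le> K' choose card (U - {j})"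
          by (rule DQuery.IH[where w="w(j := r)"]) (use DQuery.prems \<open>finite Z1\<close> in \<open>auto simp: Z1_def\<close>)
        show "card {z\<in>Z2. zeros_found n m (f one_null) K' U z} \<le> K' choose card U"
          by (rule DQuery.IH[where w=w]) (use DQuery.prems \<open>finite Z2\<close> in \<open>auto simp: Z2_def\<close>)
      qed
      also have "\<dots> = K choose card U"
      proof -
        have "card U = Suc (card (U - {j}))"
          using True DQuery.prems(2) by (metis card_Suc_Diff1 finite_atLeastAtMost finite_subset)
        then show ?thesis
          by (simp only: Suc binomial_Suc_Suc)
      qed
      finally show ?thesis .
    next
      case False
      define a where "a = hard_input n m w c"
      have found: "zeros_found n m (f a) K' U z"
        if "z \<in> Z" "zeros_found n m (DQuery c f) K U z" for z
      proof -
        have "hard_input n m z c = a"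
          using False that(1) DQuery.prems(3)[of z j]
          by (cases "j \<in> U") (auto simp: a_def c hard_input_def grid_def)
        moreover have "(z j', j') \<noteq> c" if "j' \<in> U" for j'
          using False DQuery.prems(4)[OF \<open>z \<in> Z\<close> that] that by (auto simp: c)
        ultimately show ?thesis
          using that(2) zeros_found_Cons[of n m c f K' U z] by (simp add: Suc)
      qed
      have "card {z\<in>Z. zeros_found n m (DQuery c f) K U z} \<le> card {z\<in>Z. zeros_found n m (f a) K' U z}"
        using found DQuery.prems(1) by (intro card_mono) auto
      also have "\<dots> \<le> K' choose card U"
        by (rule DQuery.IH[where w=w]) (use DQuery.prems in auto)
      also have "\<dots> \<le> K choose card U"
        by (simp add: Suc binomial_right_mono)
      finally show ?thesis .
    qed
  qed
qed

text \<open>Cells in \<open>Q\<close> (those already queried on \<open>x0\<close>) may only be used for leaves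
  outside \<open>G\<close> whose content \<open>zero_null\<close> is already a valid leaf.\<close>

locale tree_placement =
  fixes n m :: nat and x0 :: "cell \<Rightarrow> sym" and Q :: "cell set" and b :: nat
    and node :: "bool list \<Rightarrow> cell" and G :: "nat set"
  assumes two_le_m: "2 \<le> m"
    and x0_inputs: "x0 \<in> inputs n m"
    and b_col: "b \<in> {1..m}"
    and root_grid: "node [] \<in> grid n m"
    and root_col: "snd (node []) = b"
    and root_fresh: "node [] \<notin> Q"
    and node_grid: "\<And>p. p \<in> tree_nodes m - {[]} \<Longrightarrow> node p \<in> grid n m"
    and node_col: "\<And>p. p \<in> tree_nodes m - {[]} \<Longrightarrow> snd (node p) \<noteq> b"
    and node_inj: "inj_on node (tree_nodes m - {[]})"
    and leaf_col: "\<And>j. j \<in> {1..m} - {b} \<Longrightarrow> snd (node (Tpath m j)) = j"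
    and queried_node: "\<And>p. p \<in> tree_nodes m - {[]} \<Longrightarrow> node p \<in> Q \<Longrightarrow>
                         \<exists>j\<in>{1..m} - {b} - G. p = Tpath m j \<and> x0 (node p) = zero_null"
    and queried_col_b: "\<And>c. c \<in> Q \<Longrightarrow> c \<in> grid n m \<Longrightarrow> snd c = b \<Longrightarrow> c \<noteq> node [] \<Longrightarrow>
                          x0 c = one_null"
    and G_subset: "G \<subseteq> {1..m} - {b}"
    and card_G: "card G = m div 2"
begin

definition child :: "bool list \<Rightarrow> bool \<Rightarrow> ptr" where
  "child p d = (if p @ [d] \<in> tree_nodes m then Some (node (p @ [d])) else None)"

definition completion :: "cell \<Rightarrow> sym" where
  "completion c =
    (if c \<in> Q then x0 c
     else if c = node [] then (True, child [] False, child [] True, None)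
     else if c \<in> node ` (tree_nodes m - {[]}) then
       (let p = inv_into (tree_nodes m - {[]}) node c in
        (False, child p False, child p True, if p \<in> Tpath m ` G then Some (node []) else None))
     else if c \<in> grid n m \<and> snd c = b then one_null
     else zero_null)"

lemma completion_agrees: "c \<in> Q \<Longrightarrow> completion c = x0 c"
  by (simp add: completion_def)

lemma completion_root: "completion (node []) = (True, child [] False, child [] True, None)"
  using root_fresh by (simp add: completion_def)

lemma completion_node:
  assumes "p \<in> tree_nodes m - {[]}" "node p \<notin> Q"
  shows "completion (node p) =
           (False, child p False, child p True, if p \<in> Tpath m ` G then Some (node []) else None)"
proof -
  have "node p \<noteq> node []"
    using node_col[OF assms(1)] root_col by metis
  then show ?thesis
    using assms node_inj by (simp add: completion_def inv_into_f_f)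
qed

lemma completion_child:
  assumes "p @ [d] \<in> tree_nodes m"
  shows "(if d then rpoint (completion (node p)) else lpoint (completion (node p)))
           = Some (node (p @ [d]))"
proof (cases "p = []")
  case True
  then show ?thesis
    using assms by (cases d) (simp_all add: completion_root child_def)
next
  case False
  then have p: "p \<in> tree_nodes m - {[]}"
    using assms tree_nodes_prefix by blast
  have "node p \<notin> Q"
  proof
    assume "node p \<in> Q"
    then obtain i where i: "i \<in> {1..m}" "p = Tpath m i"
      using queried_node[OF p] by blast
    obtain j ds where "j \<in> {1..m}" "Tpath m j = p @ d # ds"
      using assms by (auto simp: tree_nodes_def)
    then show False
      using Tpath_append_eq_Nil[of i m j "d # ds"] i by simp
  qed
  then show ?thesis
    using assms completion_node[OF p] by (cases d) (simp_all add: child_def)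
qed

lemma follow_completion:
  assumes "j \<in> {1..m}"
  shows "follow completion (node []) (Tpath m j) = Some (node (Tpath m j))"
proof -
  have "follow completion (node []) ([] @ Tpath m j) = Some (node ([] @ Tpath m j))"
    using follow_embedded_paths[OF tree_nodes_prefix completion_child] Tpath_in_tree_nodes[OF assms]
    by simp
  then show ?thesis
    by simp
qed

lemma completion_leaf:
  assumes j: "j \<in> {1..m} - {b}"
  shows "\<not> val (completion (node (Tpath m j))) \<and>
         (bpoint (completion (node (Tpath m j))) = Some (node []) \<longleftrightarrow> j \<in> G)"
proof (cases "node (Tpath m j) \<in> Q")
  case True
  have p: "Tpath m j \<in> tree_nodes m - {[]}"
    using j two_le_m by (simp add: Tpath_in_tree_nodes Tpath_ne_Nil)
  obtain j' where "j' \<in> {1..m} - {b} - G" "Tpath m j = Tpath m j'"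
    and x0: "x0 (node (Tpath m j)) = zero_null"
    using queried_node[OF p True] by blast
  then have "j \<notin> G"
    using j inj_on_Tpath[of m] by (auto dest: inj_onD)
  then show ?thesis
    using x0 True root_fresh by (auto simp: completion_agrees zero_null_def)
next
  case False
  have "Tpath m j \<in> Tpath m ` G \<longleftrightarrow> j \<in> G"
    using j G_subset inj_on_Tpath[of m] by (auto dest: inj_onD)
  then show ?thesis
    using j two_le_m False by (simp add: completion_node Tpath_in_tree_nodes Tpath_ne_Nil)
qed

lemma completion_col_b:
  assumes "c \<in> grid n m" "snd c = b" "c \<noteq> node []"
  shows "completion c = one_null"
proof (cases "c \<in> Q")
  case True
  then show ?thesis
    using assms queried_col_b by (simp add: completion_agrees)
next
  case False
  have "c \<notin> node ` (tree_nodes m - {[]})"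
    using assms(2) node_col by blast
  then show ?thesis
    using assms False by (simp add: completion_def)
qed

lemma completion_in_inputs: "completion \<in> inputs n m"
proof -
  have child: "valid_ptr n m (child p d)" for p d
    using node_grid by (simp add: child_def valid_ptr_def)
  have root: "valid_ptr n m (Some (node []))"
    using root_grid by (simp add: valid_ptr_def)
  have "valid_ptr n m None"
    by (simp add: valid_ptr_def)
  with child root x0_inputs show ?thesis
    by (auto simp: inputs_def completion_def Let_def zero_null_def one_null_def node_grid root_grid)
qed

lemma g_completion: "g n m completion"
  unfolding g_def
proof (intro exI conjI)
  show "b \<in> {1..m}" "node [] \<in> grid n m" "snd (node []) = b"
    using b_col root_grid root_col .
  show "marked_col n completion b"
    unfolding marked_col_def
  proof
    fix i assume "i \<in> {1..n}"
    then have "(i, b) \<in> grid n m"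
      using b_col by (simp add: grid_def)
    then show "val (completion (i, b))"
      by (cases "(i, b) = node []") (simp_all add: completion_root completion_col_b one_null_def)
  qed
  show "\<forall>b'\<in>{1..m}. marked_col n completion b' \<longrightarrow> b' = b"
  proof (intro ballI impI, rule ccontr)
    fix b' assume b': "b' \<in> {1..m}" "marked_col n completion b'" "b' \<noteq> b"
    then have "node (Tpath m b') \<in> grid n m" "snd (node (Tpath m b')) = b'"
      using two_le_m by (simp_all add: node_grid leaf_col Tpath_in_tree_nodes Tpath_ne_Nil)
    then show False
      using b' completion_leaf[of b'] by (auto simp: marked_col_def grid_def)
  qed
  show "completion (node []) \<noteq> one_null"
  proof -
    obtain d ds where "Tpath m 1 = d # ds"
      using two_le_m Tpath_ne_Nil[of m 1] by (auto simp: neq_Nil_conv)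
    then have "[d] \<in> tree_nodes m"
      using two_le_m tree_nodes_prefix[of "[d]" ds m] Tpath_in_tree_nodes[of 1 m] by simp
    then show ?thesis
      by (cases d) (simp_all add: completion_root child_def one_null_def)
  qed
  show "\<forall>a'\<in>grid n m. snd a' = b \<and> completion a' \<noteq> one_null \<longrightarrow> a' = node []"
    using completion_col_b by blast
  show "\<forall>j\<in>{1..m} - {b}. \<exists>l. follow completion (node []) (Tpath m j) = Some l \<and> snd l = j \<and>
          \<not> val (completion l)"
    using follow_completion leaf_col completion_leaf by blast
  have "{j \<in> {1..m} - {b}. bpoint (completion (the (follow completion (node []) (Tpath m j))))
          = Some (node [])} = G"
  proof (rule set_eqI)
    fix j
    show "j \<in> {j \<in> {1..m} - {b}. bpoint (completion (the (follow completion (node []) (Tpath m j))))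
            = Some (node [])} \<longleftrightarrow> j \<in> G"
    proof (cases "j \<in> {1..m} - {b}")
      case True
      then show ?thesis
        using follow_completion[of j] completion_leaf[OF True] by simp
    next
      case False
      then show ?thesis
        using G_subset by auto
    qed
  qed
  then show "card {j \<in> {1..m} - {b}. bpoint (completion (the (follow completion (node []) (Tpath m j))))
               = Some (node [])} = m div 2"
    using card_G by simp
qed

end

lemma hard_input_leaves:
  assumes n: "1 \<le> n" and m: "3 \<le> m" and Q: "finite Q" "8 * card Q \<le> n * m"
    and z: "\<And>j. j \<in> {1..m} \<Longrightarrow> z j \<in> {1..n}"
  obtains leaf G where
    "\<And>j. j \<in> {1..m} - {b} \<Longrightarrow> leaf j \<in> grid n m"
    "\<And>j. j \<in> {1..m} - {b} \<Longrightarrow> snd (leaf j) = j"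
    "\<And>j. j \<in> {1..m} - {b} \<Longrightarrow> leaf j \<in> Q \<Longrightarrow> leaf j = (z j, j) \<and> j \<notin> G"
    "G \<subseteq> {1..m} - {b}" "card G = m div 2"
proof -
  define B where "B = {1..m} - {b}"
  define F where "F = {j\<in>B. \<forall>i\<in>{1..n}. (i, j) \<in> Q}"
  define leaf where
    "leaf j = (if j \<in> F then (z j, j) else (SOME i. i \<in> {1..n} \<and> (i, j) \<notin> Q, j))" for j
  have "{1..n} \<times> F \<subseteq> Q"
    by (auto simp: F_def)
  then have "card ({1..n} \<times> F) \<le> card Q"
    by (rule card_mono[OF Q(1)])
  then have "n * card F \<le> card Q"
    by (simp add: card_cartesian_product)
  then have "n * (8 * card F) \<le> n * m"
    using Q(2) by linarith
  then have "8 * card F \<le> m"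
    using n by simp
  moreover have "m - 1 \<le> card B"
    using diff_card_le_card_Diff[of "{b}" "{1..m}"] by (simp add: B_def)
  moreover have "card (B - F) = card B - card F"
    by (rule card_Diff_subset) (auto simp: F_def B_def)
  ultimately have "m div 2 \<le> card (B - F)"
    using m by linarith
  then obtain G where G: "G \<subseteq> B - F" "card G = m div 2"
    by (meson obtain_subset_with_card_n)
  have leaf: "leaf j \<in> grid n m \<and> snd (leaf j) = j \<and> (leaf j \<in> Q \<longrightarrow> leaf j = (z j, j) \<and> j \<notin> G)"
    if j: "j \<in> B" for j
  proof (cases "j \<in> F")
    case True
    then show ?thesis
      using z[of j] j G by (auto simp: leaf_def grid_def B_def)
  next
    case False
    then have "\<exists>i. i \<in> {1..n} \<and> (i, j) \<notin> Q"
      using j by (auto simp: F_def)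
    from someI_ex[OF this] show ?thesis
      using False j by (auto simp: leaf_def grid_def B_def)
  qed
  show thesis
    using leaf G unfolding B_def by (intro that[of leaf G]) blast+
qed

lemma card_free_cells:
  assumes "16 \<le> n" "8 \<le> m" "finite Q" "8 * card Q \<le> n * m" "finite L" "card L \<le> m"
  shows "4 * m \<le> card ({1..n} \<times> ({1..m} - {b}) - Q - L)"
proof -
  have "m - 1 \<le> card ({1..m} - {b})"
    using diff_card_le_card_Diff[of "{b}" "{1..m}"] by simp
  then have "n * (m - 1) \<le> card ({1..n} \<times> ({1..m} - {b}))"
    by (simp add: card_cartesian_product)
  moreover have "card ({1..n} \<times> ({1..m} - {b})) - card Q \<le> card ({1..n} \<times> ({1..m} - {b}) - Q)"
    using assms(3) by (rule diff_card_le_card_Diff)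
  moreover have "card ({1..n} \<times> ({1..m} - {b}) - Q) - card L \<le> card ({1..n} \<times> ({1..m} - {b}) - Q - L)"
    using assms(5) by (rule diff_card_le_card_Diff)
  moreover have "n * (m - 1) + n = n * m" "8 * n \<le> n * m" "16 * m \<le> n * m"
    using assms(1,2) by (simp_all add: algebra_simps)
  ultimately show ?thesis
    using assms(4,6) by linarith
qed

lemma internal_cells_exist:
  assumes n: "16 \<le> n" and m: "8 \<le> m" and Q: "finite Q" "8 * card Q \<le> n * m"
    and L: "finite L" "card L \<le> m"
  obtains h where "inj_on h (tree_nodes m - {[]} - Tpath m ` ({1..m} - {b}))"
    "h ` (tree_nodes m - {[]} - Tpath m ` ({1..m} - {b})) \<subseteq> {1..n} \<times> ({1..m} - {b}) - Q - L"
proof -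
  let ?I = "tree_nodes m - {[]} - Tpath m ` ({1..m} - {b})"
  have "card ?I \<le> card (tree_nodes m)"
    by (rule card_mono[OF finite_tree_nodes]) auto
  also have "\<dots> \<le> card ({1..n} \<times> ({1..m} - {b}) - Q - L)"
    using card_tree_nodes[of m] card_free_cells[OF n m Q L, of b] m by simp
  finally have "card ?I \<le> card ({1..n} \<times> ({1..m} - {b}) - Q - L)" .
  moreover have "finite ?I" "finite ({1..n} \<times> ({1..m} - {b}) - Q - L)"
    using finite_tree_nodes[of m] by simp_all
  ultimately obtain h where "h ` ?I \<subseteq> {1..n} \<times> ({1..m} - {b}) - Q - L" "inj_on h ?I"
    using card_le_inj by blast
  then show thesis
    by (intro that)
qed

definition tree_cells ::
    "nat \<Rightarrow> nat set \<Rightarrow> cell \<Rightarrow> (nat \<Rightarrow> cell) \<Rightarrow> (bool list \<Rightarrow> cell) \<Rightarrow> bool list \<Rightarrow> cell" where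
  "tree_cells m B a leaf h p =
     (if p = [] then a else if p \<in> Tpath m ` B then leaf (inv_into B (Tpath m) p) else h p)"

lemma tree_cells_Tpath:
  assumes "2 \<le> m" "B \<subseteq> {1..m}" "j \<in> B"
  shows "tree_cells m B a leaf h (Tpath m j) = leaf j"
proof -
  have "inj_on (Tpath m) B"
    using inj_on_Tpath assms(2) by (rule inj_on_subset)
  moreover have "Tpath m j \<noteq> []"
    using assms Tpath_ne_Nil by blast
  ultimately show ?thesis
    using assms(3) by (simp add: tree_cells_def)
qed

lemma tree_cells_internal:
  "p \<noteq> [] \<Longrightarrow> p \<notin> Tpath m ` B \<Longrightarrow> tree_cells m B a leaf h p = h p"
  by (simp add: tree_cells_def)

lemma inj_on_tree_cells:
  assumes m: "2 \<le> m" and B: "B \<subseteq> {1..m}" and leaf: "inj_on leaf B"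
    and h: "inj_on h (tree_nodes m - {[]} - Tpath m ` B)"
    and disjoint: "h ` (tree_nodes m - {[]} - Tpath m ` B) \<inter> leaf ` B = {}"
  shows "inj_on (tree_cells m B a leaf h) (tree_nodes m - {[]})"
proof -
  define c where "c = tree_cells m B a leaf h"
  define L where "L = Tpath m ` B"
  define I where "I = tree_nodes m - {[]} - L"
  have c_leaf: "c (Tpath m j) = leaf j" if "j \<in> B" for j
    using m B that unfolding c_def by (rule tree_cells_Tpath)
  have c_internal: "c p = h p" if "p \<in> I" for p
    using that unfolding c_def I_def L_def by (intro tree_cells_internal) blast+
  have "L \<subseteq> tree_nodes m - {[]}"
    unfolding L_def
  proof (rule image_subsetI)
    fix j assume "j \<in> B"
    with B have "j \<in> {1..m}"
      by (rule subsetD)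
    then show "Tpath m j \<in> tree_nodes m - {[]}"
      using Tpath_in_tree_nodes Tpath_ne_Nil[OF m] by blast
  qed
  then have nodes: "tree_nodes m - {[]} = I \<union> L"
    unfolding I_def by (metis Diff_partition Un_commute)
  have inj_leaves: "inj_on c L"
  proof (rule inj_onI)
    fix p q assume "p \<in> L" "q \<in> L" and eq: "c p = c q"
    then obtain i j where ij: "i \<in> B" "j \<in> B" "p = Tpath m i" "q = Tpath m j"
      unfolding L_def by blast
    then have "leaf i = leaf j"
      using eq c_leaf by simp
    then show "p = q"
      using ij leaf by (simp add: inj_on_eq_iff)
  qed
  have "inj_on c I \<longleftrightarrow> inj_on h I"
    by (rule inj_on_cong) (rule c_internal)
  then have inj_internal: "inj_on c I"
    using h by (simp add: I_def L_def)
  have apart: "c p \<noteq> c q" if p: "p \<in> I" and q: "q \<in> L" for p q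
  proof -
    obtain j where j: "j \<in> B" "q = Tpath m j"
      using q unfolding L_def by blast
    have "h p \<in> h ` I" "leaf j \<in> leaf ` B"
      using p j(1) by simp_all
    then have "h p \<noteq> leaf j"
      using disjoint unfolding I_def L_def by (metis IntI empty_iff)
    then show ?thesis
      using c_leaf[OF j(1)] c_internal[OF p] j(2) by simp
  qed
  show ?thesis
    unfolding c_def[symmetric] nodes
  proof (rule inj_onI)
    fix p q assume "p \<in> I \<union> L" "q \<in> I \<union> L" and eq: "c p = c q"
    then consider "p \<in> I" "q \<in> I" | "p \<in> I" "q \<in> L" | "p \<in> L" "q \<in> I" | "p \<in> L" "q \<in> L"
      by blast
    then show "p = q"
    proof cases
      case 1
      then show ?thesis
        using inj_internal eq by (simp add: inj_on_eq_iff)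
    next
      case 2
      then show ?thesis
        using apart eq by simp
    next
      case 3
      then show ?thesis
        using apart[of q p] eq by simp
    next
      case 4
      then show ?thesis
        using inj_leaves eq by (simp add: inj_on_eq_iff)
    qed
  qed
qed

lemma tree_placement_hard_input:
  assumes n: "16 \<le> n" and m: "8 \<le> m" and Q: "finite Q" "8 * card Q \<le> n * m"
    and z: "\<And>j. j \<in> {1..m} \<Longrightarrow> z j \<in> {1..n}" and b: "b \<in> {1..m}" and fresh: "(z b, b) \<notin> Q"
  shows "\<exists>node G. tree_placement n m (hard_input n m z) Q b node G"
proof -
  define B where "B = {1..m} - {b}"
  obtain leaf G where
    leaf_grid: "\<And>j. j \<in> B \<Longrightarrow> leaf j \<in> grid n m"
    and leaf_col: "\<And>j. j \<in> B \<Longrightarrow> snd (leaf j) = j"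
    and leaf_queried: "\<And>j. j \<in> B \<Longrightarrow> leaf j \<in> Q \<Longrightarrow> leaf j = (z j, j) \<and> j \<notin> G"
    and G: "G \<subseteq> B" "card G = m div 2"
    unfolding B_def by (rule hard_input_leaves[of n m Q z b]) (use n m Q z in auto)
  have "finite (leaf ` B)" "card (leaf ` B) \<le> m"
    using card_image_le[of B leaf] card_mono[of "{1..m}" B] by (simp_all add: B_def)
  then obtain h where h: "inj_on h (tree_nodes m - {[]} - Tpath m ` B)"
    "h ` (tree_nodes m - {[]} - Tpath m ` B) \<subseteq> {1..n} \<times> B - Q - leaf ` B"
    unfolding B_def by (rule internal_cells_exist[OF n m Q])
  define node where "node = tree_cells m B (z b, b) leaf h"
  have "2 \<le> m" "B \<subseteq> {1..m}"
    using m by (auto simp: B_def)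
  then have node_leaf: "node (Tpath m j) = leaf j" if "j \<in> B" for j
    using that by (simp add: node_def tree_cells_Tpath)
  have node_cases: "(\<exists>j\<in>B. p = Tpath m j \<and> node p = leaf j) \<or> node p \<in> {1..n} \<times> B - Q - leaf ` B"
    if "p \<in> tree_nodes m - {[]}" for p
  proof (cases "p \<in> Tpath m ` B")
    case True
    then show ?thesis
      using node_leaf by blast
  next
    case False
    then have "node p = h p"
      using that by (simp add: node_def tree_cells_internal)
    then show ?thesis
      using that False h(2) by blast
  qed
  have "tree_placement n m (hard_input n m z) Q b node G"
  proof
    show "2 \<le> m" "hard_input n m z \<in> inputs n m" "b \<in> {1..m}" "node [] \<notin> Q"
      using m b fresh by (simp_all add: hard_input_in_inputs node_def tree_cells_def)
    show "node [] \<in> grid n m" "snd (node []) = b"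
      using z[OF b] b by (simp_all add: node_def tree_cells_def grid_def)
    show "G \<subseteq> {1..m} - {b}" "card G = m div 2"
      using G by (simp_all add: B_def)
    show "snd (node (Tpath m j)) = j" if "j \<in> {1..m} - {b}" for j
      using that leaf_col node_leaf by (simp add: B_def)
    show "node p \<in> grid n m" "snd (node p) \<noteq> b" if "p \<in> tree_nodes m - {[]}" for p
    proof -
      from node_cases[OF that] have "node p \<in> grid n m \<and> snd (node p) \<in> B"
      proof
        assume "\<exists>j\<in>B. p = Tpath m j \<and> node p = leaf j"
        then obtain j where "j \<in> B" "node p = leaf j"
          by blast
        then show ?thesis
          using leaf_grid[of j] leaf_col[of j] by simp
      next
        assume "node p \<in> {1..n} \<times> B - Q - leaf ` B"
        then show ?thesis
          using \<open>B \<subseteq> {1..m}\<close> by (auto simp: grid_def)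
      qed
      then show "node p \<in> grid n m" "snd (node p) \<noteq> b"
        by (simp_all add: B_def)
    qed
    show "hard_input n m z c = one_null"
      if "c \<in> Q" "c \<in> grid n m" "snd c = b" "c \<noteq> node []" for c
      using that by (cases c) (simp add: node_def tree_cells_def hard_input_def)
    show "\<exists>j\<in>{1..m} - {b} - G. p = Tpath m j \<and> hard_input n m z (node p) = zero_null"
      if p: "p \<in> tree_nodes m - {[]}" and queried: "node p \<in> Q" for p
    proof -
      obtain j where j: "j \<in> B" "p = Tpath m j" "node p = leaf j"
        using node_cases[OF p] queried by blast
      then have "leaf j = (z j, j)" "j \<notin> G"
        using leaf_queried[of j] queried by simp_all
      then show ?thesis
        using j by (intro bexI[of _ j]) (simp_all add: B_def hard_input_def)
    qed
    have "inj_on leaf B"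
      using leaf_col by (metis inj_onI)
    then show "inj_on node (tree_nodes m - {[]})"
      unfolding node_def using h \<open>2 \<le> m\<close> \<open>B \<subseteq> {1..m}\<close> by (intro inj_on_tree_cells) blast+
  qed
  then show ?thesis
    by blast
qed

lemma hard_input_completion:
  assumes "16 \<le> n" "8 \<le> m" "finite Q" "8 * card Q \<le> n * m"
    and "\<And>j. j \<in> {1..m} \<Longrightarrow> z j \<in> {1..n}" "b \<in> {1..m}" "(z b, b) \<notin> Q"
  shows "\<exists>y\<in>inputs n m. (\<forall>c\<in>Q. y c = hard_input n m z c) \<and> g n m y"
proof -
  obtain node G where "tree_placement n m (hard_input n m z) Q b node G"
    using tree_placement_hard_input[of n m Q z b] assms by blast
  then interpret tree_placement n m "hard_input n m z" Q b node G .
  show ?thesis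
    using completion_in_inputs completion_agrees g_completion by blast
qed

lemma cheap_correct_tree_queries_zeros:
  assumes n: "16 \<le> n" and m: "8 \<le> m"
    and correct: "\<And>x. x \<in> inputs n m \<Longrightarrow> dt_eval t x = g n m x"
    and z: "\<And>j. j \<in> {1..m} \<Longrightarrow> z j \<in> {1..n}"
    and cheap: "8 * dt_cost t (hard_input n m z) \<le> n * m"
    and j: "j \<in> {1..m}"
  shows "(z j, j) \<in> set (dt_queries t (hard_input n m z))"
proof (rule ccontr)
  let ?Q = "set (dt_queries t (hard_input n m z))"
  assume fresh: "(z j, j) \<notin> ?Q"
  have "card ?Q \<le> dt_cost t (hard_input n m z)"
    using card_length[of "dt_queries t (hard_input n m z)"] by (simp add: length_dt_queries)
  then have "8 * card ?Q \<le> n * m"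
    using cheap by linarith
  then obtain y where y: "y \<in> inputs n m" "\<forall>c\<in>?Q. y c = hard_input n m z c" "g n m y"
    using hard_input_completion[of n m ?Q z j] n m z j fresh by blast
  have "dt_eval t y = dt_eval t (hard_input n m z)"
    using y(2) by (intro dt_eval_cong_queries) simp
  then show False
    using correct[OF y(1)] correct[OF hard_input_in_inputs] not_g_hard_input[OF z] y(3) by simp
qed

lemma pow_div_fact_le_exp:
  fixes x :: real
  assumes "0 \<le> x"
  shows "x ^ k / fact k \<le> exp x"
proof -
  have exp: "(\<lambda>i. x ^ i /\<^sub>R fact i) sums exp x"
    by (rule exp_converges)
  have "(\<Sum>i\<in>{k}. x ^ i /\<^sub>R fact i) \<le> (\<Sum>i. x ^ i /\<^sub>R fact i)"
    by (rule sum_le_suminf[OF sums_summable[OF exp]]) (simp_all add: assms)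
  then show ?thesis
    using sums_unique[OF exp] by (simp add: divide_inverse_commute)
qed

lemma two_binomial_le_pow:
  assumes "8 * K \<le> n * m" "1 \<le> m"
  shows "2 * (K choose m) \<le> n ^ m"
proof -
  have "real (K choose m) * real m ^ m \<le> real (K choose m) * (fact m * exp (real m))"
    using pow_div_fact_le_exp[of "real m" m] by (intro mult_left_mono) (simp_all add: field_simps)
  also have "\<dots> = (real (K choose m) * fact m) * exp (real m)"
    by simp
  also have "\<dots> \<le> real K ^ m * 3 ^ m"
  proof (intro mult_mono)
    show "real (K choose m) * fact m \<le> real K ^ m"
      using binomial_fact_pow[of K m] by (metis of_nat_fact of_nat_le_iff of_nat_mult of_nat_power)
    have "exp (real m) = exp 1 ^ m"
      by (metis exp_of_nat_mult mult.right_neutral)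
    then show "exp (real m) \<le> 3 ^ m"
      using exp_le power_mono[of "exp 1 :: real" 3 m] by simp
  qed simp_all
  also have "\<dots> \<le> (real n * real m / 8) ^ m * 3 ^ m"
  proof -
    have "8 * real K \<le> real n * real m"
      using assms(1) by (metis of_nat_le_iff of_nat_mult of_nat_numeral)
    then show ?thesis
      by (intro mult_right_mono power_mono) simp_all
  qed
  also have "\<dots> = (real n ^ m * (3 / 8) ^ m) * real m ^ m"
    by (simp add: power_mult_distrib power_divide field_simps)
  finally have "real (K choose m) \<le> real n ^ m * (3 / 8) ^ m"
    using assms(2) by simp
  also have "\<dots> \<le> real n ^ m * (3 / 8)"
    using assms(2) power_decreasing[of 1 m "3 / 8 :: real"] by (intro mult_left_mono) simp_all
  finally have "real (2 * (K choose m)) \<le> real (n ^ m)"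
    by simp
  then show ?thesis
    by (simp only: of_nat_le_iff)
qed

lemma sum_ge_if_few_small:
  fixes c :: "'a \<Rightarrow> nat"
  assumes "finite Z" "2 * card {z\<in>Z. c z < K} \<le> card Z"
  shows "K * card Z \<le> 2 * (\<Sum>z\<in>Z. c z)"
proof -
  let ?S = "{z\<in>Z. c z < K}"
  have "K * card (Z - ?S) = (\<Sum>z\<in>Z - ?S. K)"
    by simp
  also have "\<dots> \<le> (\<Sum>z\<in>Z - ?S. c z)"
    by (rule sum_mono) (simp add: not_less)
  also have "\<dots> \<le> (\<Sum>z\<in>Z. c z)"
    using assms(1) by (intro sum_mono2) auto
  finally have "K * card (Z - ?S) \<le> (\<Sum>z\<in>Z. c z)" .
  have "K * card Z \<le> K * (2 * (card Z - card ?S))"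
    using assms(2) by (intro mult_le_mono2) linarith
  also have "\<dots> = 2 * (K * card (Z - ?S))"
  proof -
    have "card (Z - ?S) = card Z - card ?S"
      using assms(1) by (intro card_Diff_subset) auto
    then show ?thesis
      by (metis mult.left_commute)
  qed
  finally show ?thesis
    using \<open>K * card (Z - ?S) \<le> (\<Sum>z\<in>Z. c z)\<close> by linarith
qed

definition zero_positions :: "nat \<Rightarrow> nat \<Rightarrow> (nat \<Rightarrow> nat) set" where
  "zero_positions n m = PiE {1..m} (\<lambda>_. {1..n})"

lemma finite_zero_positions: "finite (zero_positions n m)"
  by (simp add: zero_positions_def finite_PiE)

lemma card_zero_positions: "card (zero_positions n m) = n ^ m"
  by (simp add: zero_positions_def card_PiE)

lemma zero_positions_range: "z \<in> zero_positions n m \<Longrightarrow> j \<in> {1..m} \<Longrightarrow> z j \<in> {1..n}"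
  by (auto simp: zero_positions_def)

text \<open>At most \<open>K choose m\<close> of the \<open>n ^ m\<close> hard inputs are decided with fewer than
  \<open>K = n m / 8\<close> queries, since such a run must find all \<open>m\<close> zeros among its first \<open>K\<close> queries.\<close>

lemma hard_input_average_cost:
  assumes n: "16 \<le> n" and m: "8 \<le> m"
    and correct: "\<And>x. x \<in> inputs n m \<Longrightarrow> dt_eval t x = g n m x"
  shows "real (n * m div 8) / 2 * real (card (zero_positions n m))
           \<le> (\<Sum>z\<in>zero_positions n m. real (dt_cost t (hard_input n m z)))"
proof -
  define K where "K = n * m div 8"
  let ?Z = "zero_positions n m"
  have "zeros_found n m t K {1..m} z"
    if z: "z \<in> ?Z" and cheap: "dt_cost t (hard_input n m z) < K" for z
  proof -
    have "8 * dt_cost t (hard_input n m z) \<le> n * m"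
      using cheap by (simp add: K_def)
    then have "(z j, j) \<in> set (dt_queries t (hard_input n m z))" if "j \<in> {1..m}" for j
      using cheap_correct_tree_queries_zeros[where t=t and z=z] n m correct zero_positions_range[OF z]
        that by blast
    then show ?thesis
      using cheap by (simp add: zeros_found_def length_dt_queries)
  qed
  then have "card {z\<in>?Z. dt_cost t (hard_input n m z) < K}
               \<le> card {z\<in>?Z. zeros_found n m t K {1..m} z}"
    by (intro card_mono) (auto simp: finite_zero_positions)
  also have "\<dots> \<le> K choose card {1..m}"
    by (rule card_zeros_found[OF finite_zero_positions, where w="\<lambda>_. undefined"])
       (auto simp: zero_positions_def PiE_def extensional_def)
  finally have "2 * card {z\<in>?Z. dt_cost t (hard_input n m z) < K} \<le> card ?Z"
    using two_binomial_le_pow[of K n m] m by (simp add: K_def card_zero_positions)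
  then have "K * card ?Z \<le> 2 * (\<Sum>z\<in>?Z. dt_cost t (hard_input n m z))"
    by (rule sum_ge_if_few_small[OF finite_zero_positions])
  then have "real (K * card ?Z) \<le> real (2 * (\<Sum>z\<in>?Z. dt_cost t (hard_input n m z)))"
    by (simp only: of_nat_le_iff)
  then show ?thesis
    by (simp add: K_def of_nat_sum)
qed

theorem theorem8:
  shows "\<exists>c::real. c > 0 \<and> (\<exists>N::nat. \<forall>n m::nat. N \<le> n \<longrightarrow> N \<le> m \<longrightarrow> even m \<longrightarrow>
           ennreal (c * real n * real m) \<le> R0 (inputs n m) (g n m))"
proof (intro exI conjI allI impI)
  show "(1 / 64 :: real) > 0"
    by simp
  fix n m :: nat
  assume n: "16 \<le> n" and m: "16 \<le> m" and "even m"
  have "ennreal (real (n * m div 8) / 2) \<le> R0 (inputs n m) (g n m)"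
  proof (rule R0_ge_average_cost[where Z="zero_positions n m" and x="hard_input n m"])
    show "finite (zero_positions n m)"
      by (rule finite_zero_positions)
    show "zero_positions n m \<noteq> {}"
      using n card_zero_positions[of n m] by (metis card.empty power_eq_0_iff not_numeral_le_zero)
    show "hard_input n m ` zero_positions n m \<subseteq> inputs n m"
      using hard_input_in_inputs by blast
    show "real (n * m div 8) / 2 * real (card (zero_positions n m))
            \<le> (\<Sum>z\<in>zero_positions n m. real (dt_cost t (hard_input n m z)))"
      if "\<And>y. y \<in> inputs n m \<Longrightarrow> dt_eval t y = g n m y" for t
      using n m by (intro hard_input_average_cost that) simp_all
  qed
  moreover have "1 / 64 * real n * real m \<le> real (n * m div 8) / 2"
  proof -
    have "n * m \<le> 8 * (n * m div 8) + 7" "16 * 16 \<le> n * m"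
      using mult_le_mono[OF n m] by simp_all
    then have "real n * real m \<le> 8 * real (n * m div 8) + 7" "256 \<le> real n * real m"
      by (simp_all only: of_nat_mult[symmetric] of_nat_le_iff)
    then show ?thesis
      by linarith
  qed
  ultimately show "ennreal (1 / 64 * real n * real m) \<le> R0 (inputs n m) (g n m)"
    by (meson ennreal_leI order_trans)
qed

end
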